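(* Let $n\ge2$, $Q>0$ real, and let $P\in\mathrm{Mat}(n^2,\mathbb{C})$ be a nontrivial solution of rank $r$ to $$P^*=P,\quad P^2=P,\quad Q^2(P_1P_2P_1-P_2P_1P_2)=P_1-P_2,$$ where $P_1=P\otimes I_n$, $P_2=I_n\otimes P$. Let $k=\tfrac12\operatorname{rank}(P_1-P_2)$. (a) $\operatorname{rank}(Q^2P_1P_2P_1-P_1)=\operatorname{rank}(Q^2P_2P_1P_2-P_2)=rn-k$. (b) $P$ satisfies $Q^2P_1P_2P_1=P_1$ and $Q^2P_2P_1P_2=P_2$ (i.e. $P$ is of Temperley–Lieb type) if and only if $k=rn$.
   Context: $I_n$ is the $n\times n$ identity matrix and $\otimes$ is the Kronecker product. A solution is trivial if $P=0$ or $P=I_n\otimes I_n$, nontrivial otherwise. *)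

theory Defs
  imports "HOL-Analysis.Analysis"
begin

definition kron :: "'a::times^'n^'n \<Rightarrow> 'a^'m^'m \<Rightarrow> 'a^('n \<times> 'm)^('n \<times> 'm)" where
  "kron A B = (\<chi> p q. A $ fst p $ fst q * B $ snd p $ snd q)"

definition adjoint_mat :: "complex^'n^'m \<Rightarrow> complex^'m^'n" where
  "adjoint_mat A = (\<chi> i j. cnj (A $ j $ i))"

text \<open>Canonical identification of index sets n \<times> (n \<times> n) \<cong> (n \<times> n) \<times> n
  (associativity of the tensor product), used to compare I\<otimes>P with P\<otimes>I.\<close>
definition reassoc :: "'a^('x::finite \<times> ('y::finite \<times> 'z::finite))^('x \<times> ('y \<times> 'z)) \<Rightarrow> 'a^(('x \<times> 'y) \<times> 'z)^(('x \<times> 'y) \<times> 'z)" where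
  "reassoc M = (\<chi> p q. M $ (fst (fst p), snd (fst p), snd p) $ (fst (fst q), snd (fst q), snd q))"

end

theory Submission
  imports Defs
begin

(* Let A, B be idempotents with q (ABA - BAB) = A - B, q \<noteq> 0, 1. Then M = q ABA - A and D = A - B
   are idempotent up to a scalar: M^2 = (q - 1) M, and q D^3 = (q - 1) D, so that G = q D^2 satisfies
   G^2 = (q - 1) G and has the rank of D. Over a field the rank of an idempotent is its trace, hence
   (q - 1) rank M and (q - 1) rank D are linear in tr A = tr B and tr AB, and eliminating tr AB gives
   2 rank M + rank D = 2 rank A. For A = P \<otimes> I and B = I \<otimes> P both ranks equal r n, which gives (a);
   (b) is the case M = 0. The value q = 1 is impossible: it makes the Hermitian matrix D nilpotent,
   so D = 0, and P \<otimes> I = I \<otimes> P forces P to be scalar, i.e. trivial. *)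

lemma matrix_add_rdistrib: "((A::'a::semiring_1^'n^'m) + B) ** C = A ** C + B ** C"
  by (simp add: matrix_matrix_mult_def vec_eq_iff distrib_right sum.distrib)

lemma matrix_diff_ldistrib: "(A::'a::ring_1^'n^'m) ** (B - C) = A ** B - A ** C"
  by (simp add: matrix_matrix_mult_def vec_eq_iff right_diff_distrib sum_subtractf)

lemma matrix_diff_rdistrib: "((A::'a::ring_1^'n^'m) - B) ** C = A ** C - B ** C"
  by (simp add: matrix_matrix_mult_def vec_eq_iff left_diff_distrib sum_subtractf)

lemma matrix_scaleR_left: "(c *\<^sub>R (A::'a::real_algebra_1^'n^'m)) ** B = c *\<^sub>R (A ** B)"
  by (simp add: scalar_matrix_assoc)

lemma matrix_scaleR_right: "(A::'a::real_algebra_1^'n^'m) ** (c *\<^sub>R B) = c *\<^sub>R (A ** B)"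
  by (simp add: matrix_scalar_ac scalar_matrix_assoc)

lemmas matrix_distribs = matrix_add_ldistrib matrix_add_rdistrib
  matrix_diff_ldistrib matrix_diff_rdistrib matrix_scaleR_left matrix_scaleR_right

lemma trace_scaleR: "trace (c *\<^sub>R (M::'a::real_algebra_1^'n^'n)) = c *\<^sub>R trace M"
  by (simp add: trace_def scaleR_sum_right)

lemma row_matrix_mult: "row i (A ** B) = row i A v* B"
  by (simp add: row_def vector_matrix_mult_def matrix_matrix_mult_def)

lemma vector_matrix_mult_eq_sum_rows: "(v::'a::field^'m) v* M = (\<Sum>i\<in>UNIV. v $ i *s row i M)"
  by (simp add: vec_eq_iff vector_matrix_mult_def row_def)

section \<open>Rank over an arbitrary field\<close>

(* HOL-Analysis proves its rank lemmas for real matrices only. *)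

lemma rank_mult_le_right_field: "rank ((M::'a::field^'n^'m) ** N) \<le> rank N"
proof -
  have "rows (M ** N) \<subseteq> vec.span (rows N)"
  proof
    fix x assume "x \<in> rows (M ** N)"
    then obtain i where "x = row i (M ** N)" by (auto simp: rows_def)
    then have "x = (\<Sum>j\<in>UNIV. M $ i $ j *s row j N)"
      by (simp add: row_matrix_mult vector_matrix_mult_eq_sum_rows) (simp add: row_def)
    also have "\<dots> \<in> vec.span (rows N)"
      by (intro vec.span_sum vec.span_scale vec.span_base) (auto simp: rows_def)
    finally show "x \<in> vec.span (rows N)" .
  qed
  then show ?thesis unfolding row_rank_def_gen by (rule vec.dim_mono)
qed

lemma rank_eq_0_field: "rank (M::'a::field^'n^'m) = 0 \<longleftrightarrow> M = 0"
proof -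
  have "rank M = 0 \<longleftrightarrow> rows M \<subseteq> {0}"
    unfolding row_rank_def_gen by simp
  also have "\<dots> \<longleftrightarrow> (\<forall>i. row i M = 0)"
    by (auto simp: rows_def)
  also have "\<dots> \<longleftrightarrow> M = 0"
    by (simp add: row_def vec_eq_iff)
  finally show ?thesis .
qed

lemma rank_scaleR:
  assumes "c \<noteq> 0"
  shows "rank (c *\<^sub>R (M::'a::real_field^'n^'m)) = rank M"
proof -
  have "c *\<^sub>R M = (c *\<^sub>R mat 1) ** M" and "M = (inverse c *\<^sub>R mat 1) ** (c *\<^sub>R M)"
    using assms by (simp_all add: matrix_scaleR_left)
  then show ?thesis
    using rank_mult_le_right_field[of "c *\<^sub>R mat 1" M]
      rank_mult_le_right_field[of "inverse c *\<^sub>R mat 1" "c *\<^sub>R M"]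
    by simp
qed

lemma rank_uminus: "rank (- (M::'a::real_field^'n^'m)) = rank M"
  using rank_scaleR[of "-1" M] by simp

(* E fixes its own rows from the right, so the coordinates of the rows of E in a basis B of the
   row space form a dual basis to B; the trace then counts B. *)
lemma rank_eq_trace_if_idempotent:
  fixes E :: "'a::field^'n^'n"
  assumes idem: "E ** E = E"
  shows "of_nat (rank E) = trace E"
proof -
  obtain B where B: "B \<subseteq> rows E" "vec.independent B" "rows E \<subseteq> vec.span B"
    and "card B = rank E"
    using vec.basis_exists[of "rows E"] unfolding row_rank_def_gen by blast
  have "finite B"
    using B(2) vec.finiteI_independent by blast
  have span_rows: "row i E \<in> vec.span B" for i
    using B(3) by (auto simp: rows_def)
  define c where "c i b = vec.representation B (row i E) b" for i b
  have row_expansion: "row i E = (\<Sum>b\<in>B. c i b *s b)" for i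
    unfolding c_def using B(2) span_rows \<open>finite B\<close>
    by (intro vec.sum_representation_eq[symmetric]) auto
  have dual: "(\<Sum>i\<in>UNIV. b $ i * c i b') = (if b' = b then 1 else 0)"
    if "b \<in> B" "b' \<in> B" for b b'
  proof -
    obtain j where "b = row j E"
      using B(1) \<open>b \<in> B\<close> by (auto simp: rows_def)
    then have "b = b v* E"
      using idem by (simp add: row_matrix_mult[symmetric])
    then have "b = (\<Sum>i\<in>UNIV. b $ i *s row i E)"
      by (simp add: vector_matrix_mult_eq_sum_rows)
    moreover have "vec.representation B (\<Sum>i\<in>UNIV. b $ i *s row i E)
        = (\<lambda>b'. \<Sum>i\<in>UNIV. vec.representation B (b $ i *s row i E) b')"
      by (rule vec.representation_sum[OF B(2)]) (simp add: vec.span_scale span_rows)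
    ultimately have "vec.representation B b b' = (\<Sum>i\<in>UNIV. b $ i * c i b')"
      by (simp add: vec.representation_scale[OF B(2) span_rows] c_def)
    then show ?thesis
      using vec.representation_basis[OF B(2) \<open>b \<in> B\<close>] by simp
  qed
  have "trace E = (\<Sum>i\<in>UNIV. row i E $ i)"
    by (simp add: trace_def row_def)
  also have "\<dots> = (\<Sum>i\<in>UNIV. \<Sum>b\<in>B. c i b * b $ i)"
    by (simp only: row_expansion) simp
  also have "\<dots> = (\<Sum>b\<in>B. \<Sum>i\<in>UNIV. b $ i * c i b)"
    by (subst sum.swap) (simp add: mult.commute)
  also have "\<dots> = of_nat (card B)"
    using dual by simp
  finally show ?thesis
    using \<open>card B = rank E\<close> by simp
qed

lemma rank_eq_trace_if_square_eq_scaleR: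
  fixes M :: "'a::real_field^'n^'n"
  assumes "M ** M = c *\<^sub>R M" and "c \<noteq> 0"
  shows "of_real c * of_nat (rank M) = trace M"
proof -
  have "inverse c *\<^sub>R M ** inverse c *\<^sub>R M = inverse c *\<^sub>R M"
    using assms by (simp add: matrix_scaleR_left matrix_scaleR_right)
  then have "of_nat (rank (inverse c *\<^sub>R M)) = trace (inverse c *\<^sub>R M)"
    by (rule rank_eq_trace_if_idempotent)
  then have "c *\<^sub>R of_nat (rank M) = trace M"
    using \<open>c \<noteq> 0\<close> by (simp add: rank_scaleR trace_scaleR)
  then show ?thesis
    by (simp add: scaleR_conv_of_real)
qed

section \<open>Pairs of idempotents\<close>

lemma idempotent_mult_left: "A ** A = A \<Longrightarrow> A ** (A ** M) = A ** M"
  by (simp add: matrix_mul_assoc)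

lemma idempotent_sandwich_defect_square:
  fixes A B :: "'a::real_algebra_1^'n^'n"
  assumes A: "A ** A = A" and B: "B ** B = B"
    and rel: "q *\<^sub>R (A ** B ** A - B ** A ** B) = A - B"
  shows "(q *\<^sub>R (A ** B ** A) - A) ** (q *\<^sub>R (A ** B ** A) - A)
       = (q - 1) *\<^sub>R (q *\<^sub>R (A ** B ** A) - A)"
proof -
  define X where "X = A ** B ** A"
  have AX: "A ** X = X" and XA: "X ** A = X"
    by (simp_all add: X_def matrix_mul_assoc[symmetric] A idempotent_mult_left[OF A])
  have "A ** (q *\<^sub>R (A ** B ** A - B ** A ** B)) ** A = A ** (A - B) ** A"
    by (simp only: rel)
  then have "q *\<^sub>R (X - X ** X) = A - X"
    by (simp add: X_def matrix_distribs matrix_mul_assoc[symmetric] A idempotent_mult_left[OF A])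
  then have XX: "q *\<^sub>R (X ** X) = q *\<^sub>R X - A + X"
    by (simp add: algebra_simps)
  have "(q *\<^sub>R X - A) ** (q *\<^sub>R X - A)
      = q *\<^sub>R (q *\<^sub>R (X ** X)) - q *\<^sub>R X - q *\<^sub>R X + A"
    by (simp add: matrix_distribs AX XA A algebra_simps)
  also have "\<dots> = q *\<^sub>R (q *\<^sub>R X - A + X) - q *\<^sub>R X - q *\<^sub>R X + A"
    by (simp only: XX)
  also have "\<dots> = (q - 1) *\<^sub>R (q *\<^sub>R X - A)"
    by (simp add: algebra_simps)
  finally show ?thesis
    by (simp only: X_def)
qed

lemma idempotent_diff_cube:
  fixes A B :: "'a::ring_1^'n^'n"
  assumes A: "A ** A = A" and B: "B ** B = B"
  shows "(A - B) ** (A - B) ** (A - B) = (A - B) - (A ** B ** A - B ** A ** B)"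
  by (simp add: matrix_add_ldistrib matrix_add_rdistrib matrix_diff_ldistrib matrix_diff_rdistrib
      matrix_mul_assoc[symmetric] A B idempotent_mult_left[OF A] idempotent_mult_left[OF B]
      algebra_simps)

lemma rank_sandwich_defect:
  fixes A B :: "'a::real_field^'n^'n"
  assumes A: "A ** A = A" and B: "B ** B = B"
    and rel: "q *\<^sub>R (A ** B ** A - B ** A ** B) = A - B"
    and "q \<noteq> 0" "q \<noteq> 1" and same_rank: "rank A = rank B"
  shows "2 * rank (q *\<^sub>R (A ** B ** A) - A) + rank (A - B) = 2 * rank A"
proof -
  define D where "D = A - B"
  define G where "G = q *\<^sub>R (D ** D)"
  define t where "t = trace (A ** B)"
  have trace_B: "trace B = trace A"
    using rank_eq_trace_if_idempotent[OF A] rank_eq_trace_if_idempotent[OF B] same_rank by simp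
  have "trace (A ** B ** A) = trace (A ** A ** B)"
    by (simp add: trace_mul_sym[of "A ** B" A] matrix_mul_assoc)
  then have "trace (q *\<^sub>R (A ** B ** A) - A) = of_real q * t - trace A"
    by (simp add: A t_def trace_sub trace_scaleR) (simp add: scaleR_conv_of_real)
  then have rank_defect:
    "of_real (q - 1) * of_nat (rank (q *\<^sub>R (A ** B ** A) - A)) = of_real q * t - trace A"
    using rank_eq_trace_if_square_eq_scaleR[OF idempotent_sandwich_defect_square[OF A B rel]]
      \<open>q \<noteq> 1\<close>
    by simp
  have "q *\<^sub>R (D ** D ** D) = q *\<^sub>R D - q *\<^sub>R (A ** B ** A - B ** A ** B)"
    by (simp add: D_def idempotent_diff_cube[OF A B] scaleR_diff_right)
  also have "\<dots> = (q - 1) *\<^sub>R D"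
    by (simp add: rel D_def scaleR_diff_left)
  finally have DG: "D ** G = (q - 1) *\<^sub>R D" and GG: "G ** G = (q - 1) *\<^sub>R G"
    by (simp_all add: G_def matrix_scaleR_left matrix_scaleR_right matrix_mul_assoc)
  have "G = q *\<^sub>R D ** D" and "D = inverse (q - 1) *\<^sub>R D ** G"
    using \<open>q \<noteq> 1\<close>
    by (simp add: G_def matrix_scaleR_left, simp add: DG matrix_scaleR_left)
  then have "rank D = rank G"
    using rank_mult_le_right_field[of "q *\<^sub>R D" D]
      rank_mult_le_right_field[of "inverse (q - 1) *\<^sub>R D" G]
    by simp
  moreover have "trace G = of_real q * (2 * trace A - 2 * t)"
    by (simp add: G_def D_def matrix_diff_ldistrib matrix_diff_rdistrib trace_scaleR trace_sub
        A B trace_B t_def trace_mul_sym[of B A]) (simp add: scaleR_conv_of_real)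
  ultimately have rank_diff: "of_real (q - 1) * of_nat (rank D) = of_real q * (2 * trace A - 2 * t)"
    using rank_eq_trace_if_square_eq_scaleR[OF GG] \<open>q \<noteq> 1\<close> by simp
  have "of_real (q - 1) * of_nat (2 * rank (q *\<^sub>R (A ** B ** A) - A) + rank D)
      = 2 * (of_real (q - 1) * of_nat (rank (q *\<^sub>R (A ** B ** A) - A)))
        + of_real (q - 1) * (of_nat (rank D) :: 'a)"
    by (simp add: algebra_simps)
  also have "\<dots> = of_real (q - 1) * (2 * of_nat (rank A))"
    by (simp only: rank_defect rank_diff rank_eq_trace_if_idempotent[OF A]) (simp add: algebra_simps)
  finally have "of_nat (2 * rank (q *\<^sub>R (A ** B ** A) - A) + rank D) = (of_nat (2 * rank A) :: 'a)"
    using \<open>q \<noteq> 1\<close> by simp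
  then show ?thesis
    unfolding D_def of_nat_eq_iff .
qed

lemma sandwich_eq_iff_rank_diff:
  fixes A B :: "'a::real_field^'n^'n"
  assumes "A ** A = A" and "B ** B = B"
    and "q *\<^sub>R (A ** B ** A - B ** A ** B) = A - B"
    and "q \<noteq> 0" "q \<noteq> 1" and "rank A = rank B"
  shows "q *\<^sub>R (A ** B ** A) = A \<longleftrightarrow> rank (A - B) = 2 * rank A"
  using rank_sandwich_defect[OF assms] rank_eq_0_field[of "q *\<^sub>R (A ** B ** A) - A"] by auto

lemma adjoint_mat_mult: "adjoint_mat ((M::complex^'n^'m) ** N) = adjoint_mat N ** adjoint_mat M"
  by (simp add: adjoint_mat_def matrix_matrix_mult_def vec_eq_iff mult.commute)

lemma adjoint_mat_diff: "adjoint_mat ((M::complex^'n^'m) - N) = adjoint_mat M - adjoint_mat N"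
  by (simp add: adjoint_mat_def vec_eq_iff)

lemma adjoint_mat_mult_self_eq_0:
  fixes M :: "complex^'n^'m"
  assumes "adjoint_mat M ** M = 0"
  shows "M = 0"
proof -
  have "M $ i $ j = 0" for i j
  proof -
    have "complex_of_real (\<Sum>k\<in>UNIV. (cmod (M $ k $ j))\<^sup>2) = (adjoint_mat M ** M) $ j $ j"
      unfolding of_real_sum complex_norm_square
      by (simp add: matrix_matrix_mult_def adjoint_mat_def mult.commute)
    then have "(\<Sum>k\<in>UNIV. (cmod (M $ k $ j))\<^sup>2) = 0"
      using assms by (metis of_real_eq_0_iff zero_index)
    then show ?thesis
      by (simp add: sum_nonneg_eq_0_iff)
  qed
  then show ?thesis
    by (simp add: vec_eq_iff)
qed

lemma hermitian_cube_eq_0: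
  fixes D :: "complex^'n^'n"
  assumes herm: "adjoint_mat D = D" and "D ** D ** D = 0"
  shows "D = 0"
proof -
  have "adjoint_mat (D ** D) ** (D ** D) = 0"
    using assms by (simp add: adjoint_mat_mult matrix_mul_assoc)
  then have "adjoint_mat D ** D = 0"
    using herm adjoint_mat_mult_self_eq_0 by metis
  then show ?thesis
    by (rule adjoint_mat_mult_self_eq_0)
qed

lemma hermitian_idempotents_eq:
  fixes A B :: "complex^'n^'n"
  assumes "adjoint_mat A = A" "adjoint_mat B = B" and "A ** A = A" "B ** B = B"
    and "A ** B ** A - B ** A ** B = A - B"
  shows "A = B"
  using hermitian_cube_eq_0[of "A - B"] idempotent_diff_cube[of A B] assms
  by (simp add: adjoint_mat_diff)

section \<open>Kronecker products\<close>

lemma sum_UNIV_pair: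
  "(\<Sum>p\<in>UNIV. f p) = (\<Sum>i\<in>UNIV. \<Sum>j\<in>UNIV. (f (i, j) :: 'c::comm_monoid_add))"
  by (simp add: sum.cartesian_product flip: UNIV_Times_UNIV)

lemma kron_mult:
  fixes A C :: "'a::comm_semiring_1^'n^'n" and B D :: "'a^'m^'m"
  shows "kron A B ** kron C D = kron (A ** C) (B ** D)"
proof -
  have "(\<Sum>p\<in>UNIV. A $ i $ fst p * B $ j $ snd p * (C $ fst p $ k * D $ snd p $ l))
      = (\<Sum>i'\<in>UNIV. A $ i $ i' * C $ i' $ k) * (\<Sum>j'\<in>UNIV. B $ j $ j' * D $ j' $ l)"
    for i j k l
    by (simp add: sum_UNIV_pair sum_product mult_ac) (rule sum.swap)
  then show ?thesis
    by (simp add: kron_def matrix_matrix_mult_def vec_eq_iff)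
qed

lemma trace_kron: "trace (kron (A::'a::comm_semiring_1^'n^'n) (B::'a^'m^'m)) = trace A * trace B"
  by (simp add: trace_def kron_def sum_UNIV_pair sum_product)

lemma adjoint_mat_kron: "adjoint_mat (kron A B) = kron (adjoint_mat A) (adjoint_mat B)"
  by (simp add: adjoint_mat_def kron_def vec_eq_iff)

lemma adjoint_mat_id: "adjoint_mat (mat 1) = mat 1"
  by (simp add: adjoint_mat_def mat_def vec_eq_iff)

definition assoc_index :: "('x \<times> 'y) \<times> 'z \<Rightarrow> 'x \<times> ('y \<times> 'z)" where
  "assoc_index p = (fst (fst p), snd (fst p), snd p)"

lemma bij_assoc_index: "bij assoc_index"
  by (rule bij_betw_byWitness[where f' = "\<lambda>(x, y, z). ((x, y), z)"]) (auto simp: assoc_index_def)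

lemma sum_UNIV_assoc_index: "(\<Sum>p\<in>UNIV. f (assoc_index p)) = (\<Sum>p\<in>UNIV. f p)"
  using sum.reindex_bij_betw[OF bij_assoc_index, of f] by simp

lemma reassoc_nth: "reassoc M $ p $ q = M $ assoc_index p $ assoc_index q"
  by (simp add: reassoc_def assoc_index_def)

lemma reassoc_mult:
  fixes M N :: "'a::semiring_1^('x::finite \<times> ('y::finite \<times> 'z::finite))^('x \<times> ('y \<times> 'z))"
  shows "reassoc M ** reassoc N = reassoc (M ** N)"
proof -
  have "(\<Sum>r\<in>UNIV. M $ assoc_index p $ assoc_index r * N $ assoc_index r $ assoc_index q)
      = (\<Sum>r\<in>UNIV. M $ assoc_index p $ r * N $ r $ assoc_index q)" for p q
    by (rule sum_UNIV_assoc_index)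
  then show ?thesis
    by (simp add: vec_eq_iff matrix_matrix_mult_def reassoc_nth)
qed

lemma trace_reassoc:
  fixes M :: "'a::semiring_1^('x::finite \<times> ('y::finite \<times> 'z::finite))^('x \<times> ('y \<times> 'z))"
  shows "trace (reassoc M) = trace M"
  using sum_UNIV_assoc_index[of "\<lambda>r. M $ r $ r"] by (simp add: trace_def reassoc_nth)

lemma adjoint_mat_reassoc: "adjoint_mat (reassoc M) = reassoc (adjoint_mat M)"
  by (simp add: adjoint_mat_def reassoc_def vec_eq_iff)

lemma rank_kron_id_idempotent:
  fixes P :: "'a::field_char_0^'n^'n"
  assumes "P ** P = P"
  shows "rank (kron P (mat 1 :: 'a^'m^'m)) = rank P * CARD('m)"
proof -
  have "kron P (mat 1 :: 'a^'m^'m) ** kron P (mat 1) = kron P (mat 1)"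
    using assms by (simp add: kron_mult)
  then have "of_nat (rank (kron P (mat 1 :: 'a^'m^'m))) = (of_nat (rank P * CARD('m)) :: 'a)"
    by (simp add: rank_eq_trace_if_idempotent trace_kron trace_I
        rank_eq_trace_if_idempotent[OF assms, symmetric])
  then show ?thesis
    by (simp only: of_nat_eq_iff)
qed

lemma rank_reassoc_id_kron_idempotent:
  fixes P :: "'a::field_char_0^('y::finite \<times> 'z::finite)^('y \<times> 'z)"
  assumes "P ** P = P"
  shows "rank (reassoc (kron (mat 1 :: 'a^'x::finite^'x) P)) = CARD('x) * rank P"
proof -
  have "reassoc (kron (mat 1 :: 'a^'x^'x) P) ** reassoc (kron (mat 1) P) = reassoc (kron (mat 1) P)"
    using assms by (simp add: kron_mult reassoc_mult)
  then have "of_nat (rank (reassoc (kron (mat 1 :: 'a^'x^'x) P))) = (of_nat (CARD('x) * rank P) :: 'a)"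
    by (simp add: rank_eq_trace_if_idempotent trace_reassoc trace_kron trace_I
        rank_eq_trace_if_idempotent[OF assms, symmetric])
  then show ?thesis
    by (simp only: of_nat_eq_iff)
qed

lemma mat_mult_mat: "mat a ** mat b = (mat (a * b) :: 'a::semiring_1^'n^'n)"
proof -
  have "(\<Sum>k\<in>UNIV. mat a $ i $ k * mat b $ k $ j) = (mat (a * b) :: 'a^'n^'n) $ i $ j" for i j
  proof -
    have "(\<Sum>k\<in>UNIV. mat a $ i $ k * mat b $ k $ j)
        = (\<Sum>k\<in>UNIV. if k = i then mat (a * b) $ i $ j else 0)"
      by (rule sum.cong) (auto simp: mat_def)
    then show ?thesis
      by simp
  qed
  then show ?thesis
    by (simp add: vec_eq_iff matrix_matrix_mult_def)
qed

lemma mat_eq_mat_iff: "(mat a :: 'a::zero^'n^'n) = mat b \<longleftrightarrow> a = b"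
  by (simp add: vec_eq_iff mat_def)

lemma scalar_if_kron_id_eq_reassoc_id_kron:
  fixes P :: "'a::semiring_1^('n::finite \<times> 'n)^('n \<times> 'n)"
  assumes eq: "kron P (mat 1 :: 'a^'n^'n) = reassoc (kron (mat 1 :: 'a^'n^'n) P)"
  shows "P = mat (P $ a $ a)"
proof -
  have entry: "P $ (x, y) $ (x', y') * (if z = z' then 1 else 0)
      = (if x = x' then 1 else 0) * P $ (y, z) $ (y', z')" for x y z x' y' z'
    using arg_cong[OF eq, of "\<lambda>M. M $ ((x, y), z) $ ((x', y'), z')"]
    by (simp add: kron_def reassoc_def mat_def)
  have off_diagonal: "P $ p $ p' = 0" if "p \<noteq> p'" for p p'
  proof -
    obtain x y x' y' where p: "p = (x, y)" "p' = (x', y')"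
      by (cases p, cases p')
    show ?thesis
    proof (cases "x = x'")
      case True
      then have "y \<noteq> y'"
        using that p by simp
      then show ?thesis
        using entry[where x = x and y = x and z = y and x' = x and y' = x and z' = y'] True p by simp
    next
      case False
      then show ?thesis
        using entry[where x = x and y = y and z = y and x' = x' and y' = y' and z' = y] p by simp
    qed
  qed
  have diagonal: "P $ (x, y) $ (x, y) = P $ (y, z) $ (y, z)" for x y z
    using entry[where x = x and y = y and z = z and x' = x and y' = y and z' = z] by simp
  have "P $ p $ p = P $ a $ a" for p
    using diagonal[of "fst p" "snd p" "fst a"] diagonal[of "snd p" "fst a" "snd a"] by simp
  then show ?thesis
    using off_diagonal by (auto simp: mat_def vec_eq_iff)
qed

lemma kron_id_neq_reassoc_id_kron:
  fixes P :: "'a::idom^('n::finite \<times> 'n)^('n \<times> 'n)"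
  assumes "P ** P = P" and "P \<noteq> 0" "P \<noteq> mat 1"
  shows "kron P (mat 1 :: 'a^'n^'n) \<noteq> reassoc (kron (mat 1 :: 'a^'n^'n) P)"
proof
  assume "kron P (mat 1 :: 'a^'n^'n) = reassoc (kron (mat 1 :: 'a^'n^'n) P)"
  then obtain c where P: "P = mat c"
    using scalar_if_kron_id_eq_reassoc_id_kron by blast
  then have "c * c = c"
    using \<open>P ** P = P\<close> by (simp add: mat_mult_mat mat_eq_mat_iff)
  then have "c = 0 \<or> c = 1"
    by (metis mult_cancel_left mult.right_neutral)
  then show False
    using assms(2,3) by (auto simp: P)
qed

theorem proposition4:
  fixes P :: "complex^('n::finite \<times> 'n)^('n \<times> 'n)"
    and P1 P2 :: "complex^(('n \<times> 'n) \<times> 'n)^(('n \<times> 'n) \<times> 'n)"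
    and Q k :: real and r :: nat
  assumes n2: "CARD('n) \<ge> 2"
    and Qpos: "Q > 0"
    and herm: "adjoint_mat P = P"
    and idem: "P ** P = P"
    and P1_def: "P1 = kron P (mat 1 :: complex^'n^'n)"
    and P2_def: "P2 = reassoc (kron (mat 1 :: complex^'n^'n) P)"
    and eqn: "Q^2 *\<^sub>R (P1 ** P2 ** P1 - P2 ** P1 ** P2) = P1 - P2"
    and nontriv: "P \<noteq> 0" "P \<noteq> mat 1"
    and r_def: "r = rank P"
    and k_def: "k = real (rank (P1 - P2)) / 2"
  shows "real (rank (Q^2 *\<^sub>R (P1 ** P2 ** P1) - P1)) = real r * real CARD('n) - k
       \<and> real (rank (Q^2 *\<^sub>R (P2 ** P1 ** P2) - P2)) = real r * real CARD('n) - k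
       \<and> ((Q^2 *\<^sub>R (P1 ** P2 ** P1) = P1 \<and> Q^2 *\<^sub>R (P2 ** P1 ** P2) = P2)
            \<longleftrightarrow> k = real r * real CARD('n))"
proof -
  have idem1: "P1 ** P1 = P1" and idem2: "P2 ** P2 = P2"
    by (simp_all add: P1_def P2_def kron_mult reassoc_mult idem)
  have herm1: "adjoint_mat P1 = P1" and herm2: "adjoint_mat P2 = P2"
    by (simp_all add: P1_def P2_def adjoint_mat_kron adjoint_mat_reassoc adjoint_mat_id herm)
  have "Q^2 \<noteq> 1"
  proof
    assume "Q^2 = 1"
    then have "P1 = P2"
      using hermitian_idempotents_eq[OF herm1 herm2 idem1 idem2] eqn by simp
    then show False
      using kron_id_neq_reassoc_id_kron[OF idem nontriv] by (simp add: P1_def P2_def)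
  qed
  have "rank P1 = r * CARD('n)" and "rank P2 = rank P1"
    using rank_kron_id_idempotent[OF idem, where 'm = 'n]
      rank_reassoc_id_kron_idempotent[OF idem, where 'x = 'n]
    by (simp_all add: P1_def P2_def r_def)
  moreover have "Q^2 *\<^sub>R (P2 ** P1 ** P2 - P1 ** P2 ** P1) = P2 - P1"
    using arg_cong[OF eqn, of uminus] by (simp only: minus_diff_eq flip: scaleR_minus_right)
  moreover have "rank (P2 - P1) = rank (P1 - P2)"
    using rank_uminus[of "P1 - P2"] by simp
  moreover have "Q^2 \<noteq> 0"
    using Qpos by simp
  ultimately have
      defect1: "2 * rank (Q^2 *\<^sub>R (P1 ** P2 ** P1) - P1) + rank (P1 - P2) = 2 * (r * CARD('n))"
    and defect2: "2 * rank (Q^2 *\<^sub>R (P2 ** P1 ** P2) - P2) + rank (P1 - P2) = 2 * (r * CARD('n))"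
    and TL1: "Q^2 *\<^sub>R (P1 ** P2 ** P1) = P1 \<longleftrightarrow> rank (P1 - P2) = 2 * (r * CARD('n))"
    and TL2: "Q^2 *\<^sub>R (P2 ** P1 ** P2) = P2 \<longleftrightarrow> rank (P1 - P2) = 2 * (r * CARD('n))"
    using rank_sandwich_defect[OF idem1 idem2 eqn] rank_sandwich_defect[OF idem2 idem1]
      sandwich_eq_iff_rank_diff[OF idem1 idem2 eqn] sandwich_eq_iff_rank_diff[OF idem2 idem1]
      \<open>Q^2 \<noteq> 1\<close>
    by simp_all
  have "k = real r * real CARD('n) \<longleftrightarrow> rank (P1 - P2) = 2 * (r * CARD('n))"
    unfolding k_def of_nat_eq_iff[where 'a = real, symmetric] by (simp add: mult_ac)
  then show ?thesis
    using defect1 defect2 TL1 TL2 unfolding k_def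
    by (simp add: field_simps flip: of_nat_mult of_nat_add)
qed

end
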